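(* Let $\Lambda\colon L\times W\to[0,\infty]$ and $\Lambda'\colon L'\times W'\to[0,\infty]$ be Dowker dissimilarities that are $(\alpha,\alpha')$-interleaved (as Dowker dissimilarities). Then the Rips complexes $R\Lambda$ and $R\Lambda'$ are $(\alpha,\alpha')$-interleaved filtered simplicial complexes.
   Context: A Dowker dissimilarity is a function $\Lambda\colon L\times W\to[0,\infty]$ for sets $L,W$. Its Dowker nerve has level $t\in[0,\infty]$ equal to $N\Lambda_t=\{\text{finite }\sigma\subseteq L\mid \exists w\in W \text{ with }\Lambda(l,w)<t\ \forall l\in\sigma\}$. The Rips complex $R\Lambda$ is the filtered simplicial complex with $(R\Lambda)(t)=\{\text{finite }\sigma\subseteq L\mid \text{every }\tau\subseteq\sigma\text{ with }|\tau|\le2\text{ lies in }N\Lambda_t\}$. Let $\alpha,\alpha'\colon[0,\infty]\to[0,\infty]$ be order preserving with $t\le\alpha(t)$, $t\le\alpha'(t)$. An $(\alpha,\alpha')$-interleaving of Dowker dissimilarities $\Lambda,\Lambda'$ is a pair of relations $C\subseteq L\times L'$, $C'\subseteq L'\times L$ such that: (i) for every $t$ and nonempty $\sigma\in N\Lambda_t$, $C(\sigma)=\{l'\mid\exists l\in\sigma,(l,l')\in C\}$ is finite, nonempty and in $N\Lambda'_{\alpha(t)}$; (ii) symmetrically, for nonempty $\tau\in N\Lambda'_t$, $C'(\tau)$ is finite, nonempty and in $N\Lambda_{\alpha'(t)}$; (iii) $\Delta_L\subseteq C'\circ C$ and $\Delta_{L'}\subseteq C\circ C'$ (composition of relations;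 $\Delta$ the diagonal). Filtered simplicial complexes $K,K'$ are $(\alpha,\alpha')$-interleaved if there are continuous maps $F_t\colon|K(t)|\to|K'(\alpha(t))|$, $G_t\colon|K'(t)|\to|K(\alpha'(t))|$ on geometric realizations, commuting up to homotopy with the inclusions of the filtrations, such that $G_{\alpha(t)}\circ F_t$ is homotopic to the inclusion $|K(t)|\to|K(\alpha'(\alpha(t)))|$ and $F_{\alpha'(t)}\circ G_t$ is homotopic to the inclusion $|K'(t)|\to|K'(\alpha(\alpha'(t)))|$. *)

theory Defs
  imports "HOL-Analysis.Analysis"
begin

definition dowker_nerve :: "('l \<Rightarrow> 'w \<Rightarrow> ennreal) \<Rightarrow> ennreal \<Rightarrow> 'l set set" where
  "dowker_nerve \<Lambda> t = {\<sigma>. finite \<sigma> \<and> (\<exists>w. \<forall>l\<in>\<sigma>. \<Lambda> l w < t)}"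

definition rips :: "('l \<Rightarrow> 'w \<Rightarrow> ennreal) \<Rightarrow> ennreal \<Rightarrow> 'l set set" where
  "rips \<Lambda> t = {\<sigma>. finite \<sigma> \<and> (\<forall>\<tau>. \<tau> \<subseteq> \<sigma> \<and> card \<tau> \<le> 2 \<longrightarrow> \<tau> \<in> dowker_nerve \<Lambda> t)}"

definition dowker_interleaving ::
  "('l \<Rightarrow> 'w \<Rightarrow> ennreal) \<Rightarrow> ('l2 \<Rightarrow> 'w2 \<Rightarrow> ennreal) \<Rightarrow> (ennreal \<Rightarrow> ennreal) \<Rightarrow> (ennreal \<Rightarrow> ennreal)
    \<Rightarrow> ('l \<times> 'l2) set \<Rightarrow> ('l2 \<times> 'l) set \<Rightarrow> bool" where
  "dowker_interleaving \<Lambda> \<Lambda>' \<alpha> \<alpha>' C C' \<longleftrightarrow>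
     (\<forall>t \<sigma>. \<sigma> \<in> dowker_nerve \<Lambda> t \<and> \<sigma> \<noteq> {} \<longrightarrow>
        finite (C `` \<sigma>) \<and> C `` \<sigma> \<noteq> {} \<and> C `` \<sigma> \<in> dowker_nerve \<Lambda>' (\<alpha> t)) \<and>
     (\<forall>t \<tau>. \<tau> \<in> dowker_nerve \<Lambda>' t \<and> \<tau> \<noteq> {} \<longrightarrow>
        finite (C' `` \<tau>) \<and> C' `` \<tau> \<noteq> {} \<and> C' `` \<tau> \<in> dowker_nerve \<Lambda> (\<alpha>' t)) \<and>
     Id \<subseteq> C O C' \<and> Id \<subseteq> C' O C"

definition dowker_interleaved ::
  "('l \<Rightarrow> 'w \<Rightarrow> ennreal) \<Rightarrow> ('l2 \<Rightarrow> 'w2 \<Rightarrow> ennreal) \<Rightarrow> (ennreal \<Rightarrow> ennreal) \<Rightarrow> (ennreal \<Rightarrow> ennreal) \<Rightarrow> bool" where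
  "dowker_interleaved \<Lambda> \<Lambda>' \<alpha> \<alpha>' \<longleftrightarrow> (\<exists>C C'. dowker_interleaving \<Lambda> \<Lambda>' \<alpha> \<alpha>' C C')"

text \<open>Points of the realization are barycentric coordinate functions. The closed simplex of
  a finite set sigma carries the subspace topology of the product topology on 'a => real
  (which on functions supported in sigma is the Euclidean topology of R^sigma); the
  realization of K carries the weak (coherent) topology with respect to its closed simplices.\<close>

definition simplex_points :: "'a set \<Rightarrow> ('a \<Rightarrow> real) set" where
  "simplex_points \<sigma> = {x. (\<forall>a. 0 \<le> x a) \<and> (\<forall>a. a \<notin> \<sigma> \<longrightarrow> x a = 0) \<and> sum x \<sigma> = 1}"

definition realization_set :: "'a set set \<Rightarrow> ('a \<Rightarrow> real) set" where
  "realization_set K = (\<Union>\<sigma>\<in>K. simplex_points \<sigma>)"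

definition realization_open :: "'a set set \<Rightarrow> ('a \<Rightarrow> real) set \<Rightarrow> bool" where
  "realization_open K U \<longleftrightarrow> U \<subseteq> realization_set K \<and>
     (\<forall>\<sigma>\<in>K. openin (top_of_set (simplex_points \<sigma>)) (U \<inter> simplex_points \<sigma>))"

lemma istopology_realization_open: "istopology (realization_open K)"
proof -
  have int: "realization_open K (S \<inter> T)" if S: "realization_open K S" and T: "realization_open K T" for S T
  proof -
    have "openin (top_of_set (simplex_points \<sigma>)) (S \<inter> T \<inter> simplex_points \<sigma>)" if s: "\<sigma> \<in> K" for \<sigma>
    proof -
      have a: "openin (top_of_set (simplex_points \<sigma>)) (S \<inter> simplex_points \<sigma>)"
        using S s unfolding realization_open_def by blast
      have b: "openin (top_of_set (simplex_points \<sigma>)) (T \<inter> simplex_points \<sigma>)"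
        using T s unfolding realization_open_def by blast
      have eq: "S \<inter> T \<inter> simplex_points \<sigma> = (S \<inter> simplex_points \<sigma>) \<inter> (T \<inter> simplex_points \<sigma>)"
        by blast
      show ?thesis unfolding eq using a b by (rule openin_Int)
    qed
    moreover have "S \<inter> T \<subseteq> realization_set K" using S unfolding realization_open_def by blast
    ultimately show ?thesis unfolding realization_open_def by blast
  qed
  have un: "realization_open K (\<Union>\<K>)" if H: "\<forall>U\<in>\<K>. realization_open K U" for \<K>
  proof -
    have "openin (top_of_set (simplex_points \<sigma>)) (\<Union>\<K> \<inter> simplex_points \<sigma>)" if s: "\<sigma> \<in> K" for \<sigma>
    proof -
      have "\<forall>V\<in>(\<lambda>U. U \<inter> simplex_points \<sigma>) ` \<K>. openin (top_of_set (simplex_points \<sigma>)) V"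
        using H s unfolding realization_open_def by blast
      then have "openin (top_of_set (simplex_points \<sigma>)) (\<Union>((\<lambda>U. U \<inter> simplex_points \<sigma>) ` \<K>))"
        by (intro openin_Union) blast
      moreover have "\<Union>((\<lambda>U. U \<inter> simplex_points \<sigma>) ` \<K>) = \<Union>\<K> \<inter> simplex_points \<sigma>"
        by blast
      ultimately show ?thesis by simp
    qed
    moreover have "\<Union>\<K> \<subseteq> realization_set K" using H unfolding realization_open_def by blast
    ultimately show ?thesis unfolding realization_open_def by blast
  qed
  show ?thesis unfolding istopology_def using int un by blast
qed

definition realization :: "'a set set \<Rightarrow> ('a \<Rightarrow> real) topology" where
  "realization K = topology (realization_open K)"

lemma openin_realization: "openin (realization K) U \<longleftrightarrow> realization_open K U"
  unfolding realization_def by (simp add: istopology_realization_open)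

text \<open>A filtered simplicial complex is K :: ennreal => 'a set set. The inclusion
  |K(s)| -> |K(t)| of geometric realizations is the identity on coordinate functions.\<close>

definition filtered_interleaved ::
  "(ennreal \<Rightarrow> 'a set set) \<Rightarrow> (ennreal \<Rightarrow> 'b set set) \<Rightarrow> (ennreal \<Rightarrow> ennreal) \<Rightarrow> (ennreal \<Rightarrow> ennreal) \<Rightarrow> bool" where
  "filtered_interleaved K K' \<alpha> \<alpha>' \<longleftrightarrow>
     (\<exists>F G. (\<forall>t. continuous_map (realization (K t)) (realization (K' (\<alpha> t))) (F t)) \<and>
            (\<forall>t. continuous_map (realization (K' t)) (realization (K (\<alpha>' t))) (G t)) \<and>
            (\<forall>s t. s \<le> t \<longrightarrow>
               homotopic_with (\<lambda>_. True) (realization (K s)) (realization (K' (\<alpha> t))) (F t) (F s)) \<and>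
            (\<forall>s t. s \<le> t \<longrightarrow>
               homotopic_with (\<lambda>_. True) (realization (K' s)) (realization (K (\<alpha>' t))) (G t) (G s)) \<and>
            (\<forall>t. homotopic_with (\<lambda>_. True) (realization (K t)) (realization (K (\<alpha>' (\<alpha> t))))
                   (G (\<alpha> t) \<circ> F t) id) \<and>
            (\<forall>t. homotopic_with (\<lambda>_. True) (realization (K' t)) (realization (K' (\<alpha> (\<alpha>' t))))
                   (F (\<alpha>' t) \<circ> G t) id))"

end

theory Submission
  imports Defs
begin

(* Fix choice functions f inside C and g inside C'. Since C sends nonempty nerve simplices at level t
   into nerve simplices at level \<alpha> t, it sends edges to edges, so f is a simplicial map from the Rips
   complex at t to the one at \<alpha> t, for every t at once; its linear extension serves as F_t. The
   condition Id \<subseteq> C O C' puts both \<sigma> and g(f(\<sigma>)) inside C'(C(\<sigma>)), so \<sigma> \<union> g(f(\<sigma>)) is a Rips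
   simplex at level \<alpha>'(\<alpha> t): g \<circ> f is contiguous to the identity, and the straight-line homotopy
   between their realizations stays in that simplex. Its continuity on [0,1] \<times> |K| uses that, [0,1]
   being locally compact, this product carries the topology coherent with the pieces [0,1] \<times> simplex. *)

lemma dowker_nerve_subset: "\<sigma> \<in> dowker_nerve \<Lambda> t \<Longrightarrow> \<tau> \<subseteq> \<sigma> \<Longrightarrow> \<tau> \<in> dowker_nerve \<Lambda> t"
  unfolding dowker_nerve_def by (auto intro: finite_subset)

lemma dowker_nerve_mono: "s \<le> t \<Longrightarrow> dowker_nerve \<Lambda> s \<subseteq> dowker_nerve \<Lambda> t"
  unfolding dowker_nerve_def using less_le_trans by blast

lemma rips_mono: "s \<le> t \<Longrightarrow> rips \<Lambda> s \<subseteq> rips \<Lambda> t"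
  unfolding rips_def using dowker_nerve_mono by blast

lemma finite_rips: "\<sigma> \<in> rips \<Lambda> t \<Longrightarrow> finite \<sigma>"
  unfolding rips_def by blast

definition carries_nerve ::
  "('l \<Rightarrow> 'w \<Rightarrow> ennreal) \<Rightarrow> ('l2 \<Rightarrow> 'w2 \<Rightarrow> ennreal) \<Rightarrow> (ennreal \<Rightarrow> ennreal) \<Rightarrow> ('l \<times> 'l2) set \<Rightarrow> bool" where
  "carries_nerve \<Lambda> \<Lambda>' \<beta> R \<longleftrightarrow>
     (\<forall>t \<sigma>. \<sigma> \<in> dowker_nerve \<Lambda> t \<and> \<sigma> \<noteq> {} \<longrightarrow> R `` \<sigma> \<noteq> {} \<and> R `` \<sigma> \<in> dowker_nerve \<Lambda>' (\<beta> t))"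

lemma dowker_interleaving_carries_nerve:
  assumes "dowker_interleaving \<Lambda> \<Lambda>' \<alpha> \<alpha>' C C'"
  shows "carries_nerve \<Lambda> \<Lambda>' \<alpha> C" and "carries_nerve \<Lambda>' \<Lambda> \<alpha>' C'"
  using assms unfolding dowker_interleaving_def carries_nerve_def by blast+

lemma carries_nerve_relcomp:
  assumes "carries_nerve \<Lambda> \<Lambda>' \<beta> R" and "carries_nerve \<Lambda>' \<Lambda>'' \<gamma> S"
  shows "carries_nerve \<Lambda> \<Lambda>'' (\<gamma> \<circ> \<beta>) (R O S)"
  using assms unfolding carries_nerve_def relcomp_Image comp_apply by blast

lemma rips_subset_Image:
  assumes R: "carries_nerve \<Lambda> \<Lambda>' \<beta> R" and \<sigma>: "\<sigma> \<in> rips \<Lambda> t"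
    and "finite \<tau>" and \<tau>: "\<tau> \<subseteq> R `` \<sigma>"
  shows "\<tau> \<in> rips \<Lambda>' (\<beta> t)"
  unfolding rips_def
proof (intro CollectI conjI allI impI)
  fix \<rho> assume \<rho>: "\<rho> \<subseteq> \<tau> \<and> card \<rho> \<le> 2"
  have "\<forall>y\<in>\<rho>. \<exists>a. a \<in> \<sigma> \<and> (a, y) \<in> R"
    using \<rho> \<tau> by blast
  from bchoice[OF this] obtain r where r: "\<forall>y\<in>\<rho>. r y \<in> \<sigma> \<and> (r y, y) \<in> R"
    by blast
  have "finite \<rho>"
    using \<rho> \<open>finite \<tau>\<close> finite_subset by blast
  then have "card (r ` \<rho>) \<le> 2"
    using \<rho> card_image_le[of \<rho> r] by linarith
  then have "r ` \<rho> \<in> dowker_nerve \<Lambda> t"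
    using \<sigma> r unfolding rips_def by (simp add: image_subset_iff)
  show "\<rho> \<in> dowker_nerve \<Lambda>' (\<beta> t)"
  proof (cases "\<rho> = {}")
    case True
    then show ?thesis
      unfolding dowker_nerve_def by simp
  next
    case False
    then have "R `` (r ` \<rho>) \<in> dowker_nerve \<Lambda>' (\<beta> t)"
      using R \<open>r ` \<rho> \<in> dowker_nerve \<Lambda> t\<close> unfolding carries_nerve_def by blast
    moreover have "\<rho> \<subseteq> R `` (r ` \<rho>)"
      using r by blast
    ultimately show ?thesis
      by (rule dowker_nerve_subset)
  qed
qed fact

lemma Id_subset_relcompE:
  assumes "Id \<subseteq> R O S"
  obtains f where "\<And>a. (a, f a) \<in> R"
proof -
  have "\<forall>a. \<exists>b. (a, b) \<in> R"
    using assms by auto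
  from choice[OF this] obtain f where "\<forall>a. (a, f a) \<in> R"
    by blast
  then show thesis
    using that by blast
qed

lemma topspace_realization: "topspace (realization K) = realization_set K"
proof -
  have "realization_open K (realization_set K)"
    unfolding realization_open_def realization_set_def
    by (auto simp: Int_absorb1 SUP_upper)
  then have "realization_set K \<subseteq> topspace (realization K)"
    by (metis openin_realization openin_subset)
  moreover have "topspace (realization K) \<subseteq> realization_set K"
    using openin_topspace[of "realization K"]
    unfolding openin_realization realization_open_def by blast
  ultimately show ?thesis by blast
qed

lemma continuous_map_into_realization:
  assumes "\<tau> \<in> K" and "continuous_on S h" and "h ` S \<subseteq> simplex_points \<tau>"
  shows "continuous_map (top_of_set S) (realization K) h"
  unfolding continuous_map_def topspace_realization
proof (intro conjI allI impI)
  show "h \<in> topspace (top_of_set S) \<rightarrow> realization_set K"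
    using assms(1,3) unfolding realization_set_def by auto
  fix U assume "openin (realization K) U"
  then have "openin (top_of_set (simplex_points \<tau>)) (U \<inter> simplex_points \<tau>)"
    using assms(1) unfolding openin_realization realization_open_def by blast
  then have "openin (top_of_set S) (S \<inter> h -` (U \<inter> simplex_points \<tau>))"
    using assms(2,3) continuous_on_open_gen by blast
  moreover have "S \<inter> h -` (U \<inter> simplex_points \<tau>) = {x \<in> topspace (top_of_set S). h x \<in> U}"
    using assms(3) by auto
  ultimately show "openin (top_of_set S) {x \<in> topspace (top_of_set S). h x \<in> U}"
    by simp
qed

lemma continuous_map_from_realization:
  assumes "\<And>\<sigma>. \<sigma> \<in> K \<Longrightarrow> continuous_map (top_of_set (simplex_points \<sigma>)) X h"
  shows "continuous_map (realization K) X h"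
  unfolding continuous_map_def topspace_realization
proof (intro conjI allI impI)
  show "h \<in> realization_set K \<rightarrow> topspace X"
    using assms unfolding realization_set_def continuous_map_def by fastforce
  fix U assume U: "openin X U"
  show "openin (realization K) {x \<in> realization_set K. h x \<in> U}"
    unfolding openin_realization realization_open_def
  proof (intro conjI ballI)
    fix \<sigma> assume "\<sigma> \<in> K"
    then have "openin (top_of_set (simplex_points \<sigma>)) {x \<in> simplex_points \<sigma>. h x \<in> U}"
      using assms U openin_continuous_map_preimage by fastforce
    moreover have "{x \<in> realization_set K. h x \<in> U} \<inter> simplex_points \<sigma> = {x \<in> simplex_points \<sigma>. h x \<in> U}"
      using \<open>\<sigma> \<in> K\<close> unfolding realization_set_def by blast
    ultimately show "openin (top_of_set (simplex_points \<sigma>)) ({x \<in> realization_set K. h x \<in> U} \<inter> simplex_points \<sigma>)"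
      by simp
  qed blast
qed

lemma openin_realization_tube:
  assumes "compact N" and "N \<subseteq> I"
    and piece: "\<And>\<sigma>. \<sigma> \<in> K \<Longrightarrow> openin (top_of_set (I \<times> simplex_points \<sigma>)) (W \<inter> (I \<times> simplex_points \<sigma>))"
  shows "openin (realization K) {x \<in> realization_set K. N \<times> {x} \<subseteq> W}"
  unfolding openin_realization realization_open_def
proof (intro conjI ballI)
  fix \<sigma> assume \<sigma>: "\<sigma> \<in> K"
  let ?V = "{x \<in> realization_set K. N \<times> {x} \<subseteq> W}"
  show "openin (top_of_set (simplex_points \<sigma>)) (?V \<inter> simplex_points \<sigma>)"
  proof (subst openin_subopen, intro ballI)
    fix x assume x: "x \<in> ?V \<inter> simplex_points \<sigma>"
    have "openin (prod_topology (top_of_set I) (top_of_set (simplex_points \<sigma>))) (W \<inter> (I \<times> simplex_points \<sigma>))"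
      using piece[OF \<sigma>] by simp
    moreover have "compactin (top_of_set I) N"
      using assms(1,2) by (simp add: compactin_subtopology)
    moreover have "N \<times> {x} \<subseteq> W \<inter> (I \<times> simplex_points \<sigma>)"
      using x assms(2) by blast
    moreover have "x \<in> topspace (top_of_set (simplex_points \<sigma>))"
      using x by simp
    ultimately obtain A B where B: "openin (top_of_set (simplex_points \<sigma>)) B" "x \<in> B"
      and AB: "N \<subseteq> A" "A \<times> B \<subseteq> W \<inter> (I \<times> simplex_points \<sigma>)"
      using tube_lemma_left by metis
    have "B \<subseteq> ?V \<inter> simplex_points \<sigma>"
    proof
      fix y assume "y \<in> B"
      then have "y \<in> simplex_points \<sigma>"
        using openin_subset[OF B(1)] by auto
      moreover have "N \<times> {y} \<subseteq> W"
        using AB \<open>y \<in> B\<close> by blast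
      ultimately show "y \<in> ?V \<inter> simplex_points \<sigma>"
        using \<sigma> unfolding realization_set_def by blast
    qed
    with B show "\<exists>T. openin (top_of_set (simplex_points \<sigma>)) T \<and> x \<in> T \<and> T \<subseteq> ?V \<inter> simplex_points \<sigma>"
      by blast
  qed
qed blast

lemma openin_prod_realization:
  assumes I: "locally compact I" and W: "W \<subseteq> I \<times> realization_set K"
    and piece: "\<And>\<sigma>. \<sigma> \<in> K \<Longrightarrow> openin (top_of_set (I \<times> simplex_points \<sigma>)) (W \<inter> (I \<times> simplex_points \<sigma>))"
  shows "openin (prod_topology (top_of_set I) (realization K)) W"
  unfolding openin_prod_topology_alt
proof (intro allI impI)
  fix s x assume sx: "(s, x) \<in> W"
  then obtain \<sigma> where \<sigma>: "\<sigma> \<in> K" "x \<in> simplex_points \<sigma>" and "s \<in> I"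
    using W unfolding realization_set_def by blast
  have "openin (prod_topology (top_of_set I) (top_of_set (simplex_points \<sigma>))) (W \<inter> (I \<times> simplex_points \<sigma>))"
    using piece[OF \<sigma>(1)] by simp
  moreover have "(s, x) \<in> W \<inter> (I \<times> simplex_points \<sigma>)"
    using sx \<sigma>(2) \<open>s \<in> I\<close> by blast
  ultimately obtain A B where A: "openin (top_of_set I) A" "s \<in> A"
    and B: "x \<in> B" and AB: "A \<times> B \<subseteq> W \<inter> (I \<times> simplex_points \<sigma>)"
    by (elim openin_prod_topology_alt[THEN iffD1, rule_format, elim_format] exE conjE)
  obtain U N where U: "openin (top_of_set I) U" and N: "compact N"
    and sUN: "s \<in> U" "U \<subseteq> N" "N \<subseteq> A"
    by (rule locallyE[OF I A])
  let ?V = "{x \<in> realization_set K. N \<times> {x} \<subseteq> W}"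
  have "openin (realization K) ?V"
  proof (rule openin_realization_tube[OF N(1) _ piece])
    show "N \<subseteq> I"
      using sUN(3) openin_subset[OF A(1)] by auto
  qed
  moreover have "x \<in> ?V"
    using \<sigma> sUN(3) B AB unfolding realization_set_def by blast
  moreover have "U \<times> ?V \<subseteq> W"
    using sUN(2) by blast
  ultimately show "\<exists>U V. openin (top_of_set I) U \<and> openin (realization K) V \<and> s \<in> U \<and> x \<in> V \<and> U \<times> V \<subseteq> W"
    using U sUN(1) by blast
qed

lemma continuous_map_from_prod_realization:
  assumes "locally compact I"
    and "\<And>\<sigma>. \<sigma> \<in> K \<Longrightarrow> continuous_map (top_of_set (I \<times> simplex_points \<sigma>)) X h"
  shows "continuous_map (prod_topology (top_of_set I) (realization K)) X h"
  unfolding continuous_map_def topspace_prod_topology topspace_realization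
proof (intro conjI allI impI)
  show "h \<in> topspace (top_of_set I) \<times> realization_set K \<rightarrow> topspace X"
  proof (clarsimp simp: realization_set_def)
    fix s x \<sigma> assume "s \<in> I" "\<sigma> \<in> K" "x \<in> simplex_points \<sigma>"
    then show "h (s, x) \<in> topspace X"
      using continuous_map_funspace[OF assms(2)] by fastforce
  qed
  fix U assume U: "openin X U"
  show "openin (prod_topology (top_of_set I) (realization K)) {p \<in> topspace (top_of_set I) \<times> realization_set K. h p \<in> U}"
  proof (rule openin_prod_realization[OF assms(1)])
    fix \<sigma> assume "\<sigma> \<in> K"
    then have "openin (top_of_set (I \<times> simplex_points \<sigma>)) {p \<in> I \<times> simplex_points \<sigma>. h p \<in> U}"
      using assms(2) U openin_continuous_map_preimage by fastforce
    moreover have "{p \<in> topspace (top_of_set I) \<times> realization_set K. h p \<in> U} \<inter> (I \<times> simplex_points \<sigma>)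
        = {p \<in> I \<times> simplex_points \<sigma>. h p \<in> U}"
      using \<open>\<sigma> \<in> K\<close> unfolding realization_set_def by auto
    ultimately show "openin (top_of_set (I \<times> simplex_points \<sigma>))
        ({p \<in> topspace (top_of_set I) \<times> realization_set K. h p \<in> U} \<inter> (I \<times> simplex_points \<sigma>))"
      by simp
  qed (simp add: subset_iff)
qed

lemma simplex_points_mono:
  assumes "\<sigma> \<subseteq> \<tau>" and "finite \<tau>"
  shows "simplex_points \<sigma> \<subseteq> simplex_points \<tau>"
proof
  fix x assume x: "x \<in> simplex_points \<sigma>"
  have "sum x \<tau> = sum x \<sigma>"
    by (rule sum.mono_neutral_right) (use assms x in \<open>auto simp: simplex_points_def\<close>)
  then show "x \<in> simplex_points \<tau>"
    using x assms(1) unfolding simplex_points_def by auto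
qed

lemma simplex_points_convex:
  assumes "u \<in> simplex_points \<tau>" and "v \<in> simplex_points \<tau>" and "0 \<le> s" and "s \<le> (1::real)"
  shows "(\<lambda>a. (1 - s) * u a + s * v a) \<in> simplex_points \<tau>"
proof -
  have u: "\<forall>a. 0 \<le> u a" "\<forall>a. a \<notin> \<tau> \<longrightarrow> u a = 0" "sum u \<tau> = 1"
    and v: "\<forall>a. 0 \<le> v a" "\<forall>a. a \<notin> \<tau> \<longrightarrow> v a = 0" "sum v \<tau> = 1"
    using assms(1,2) unfolding simplex_points_def by auto
  have "(\<Sum>a\<in>\<tau>. (1 - s) * u a + s * v a) = 1"
    using u(3) v(3) by (simp add: sum.distrib flip: sum_distrib_left)
  then show ?thesis
    using u(1,2) v(1,2) assms(3,4) unfolding simplex_points_def by simp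
qed

lemma continuous_map_realizationI:
  assumes "\<And>\<sigma>. \<sigma> \<in> K \<Longrightarrow> continuous_on (simplex_points \<sigma>) h"
    and "\<And>\<sigma>. \<sigma> \<in> K \<Longrightarrow> \<exists>\<tau>\<in>K'. h ` simplex_points \<sigma> \<subseteq> simplex_points \<tau>"
  shows "continuous_map (realization K) (realization K') h"
proof (rule continuous_map_from_realization)
  fix \<sigma> assume "\<sigma> \<in> K"
  then obtain \<tau> where "\<tau> \<in> K'" "h ` simplex_points \<sigma> \<subseteq> simplex_points \<tau>"
    using assms(2) by blast
  then show "continuous_map (top_of_set (simplex_points \<sigma>)) (realization K') h"
    using continuous_map_into_realization assms(1)[OF \<open>\<sigma> \<in> K\<close>] by blast
qed

lemma continuous_on_straight_line_homotopy:
  fixes h\<^sub>0 h\<^sub>1 :: "('a \<Rightarrow> real) \<Rightarrow> 'b \<Rightarrow> real"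
  assumes "continuous_on S h\<^sub>0" and "continuous_on S h\<^sub>1"
  shows "continuous_on (T \<times> S) (\<lambda>(s, x) b. (1 - s) * h\<^sub>0 x b + s * h\<^sub>1 x b)"
  unfolding case_prod_beta
  by (intro continuous_on_coordinatewise_then_product continuous_on_add continuous_on_mult
      continuous_on_diff continuous_on_const continuous_on_fst continuous_on_snd
      continuous_on_compose2[OF continuous_on_product_then_coordinatewise[OF assms(1)] continuous_on_snd]
      continuous_on_compose2[OF continuous_on_product_then_coordinatewise[OF assms(2)] continuous_on_snd]) auto

lemma homotopic_with_realization_if_carried:
  assumes cont: "\<And>\<sigma>. \<sigma> \<in> K \<Longrightarrow> continuous_on (simplex_points \<sigma>) h\<^sub>0 \<and> continuous_on (simplex_points \<sigma>) h\<^sub>1"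
    and carrier: "\<And>\<sigma>. \<sigma> \<in> K \<Longrightarrow> \<exists>\<tau>\<in>K'. h\<^sub>0 ` simplex_points \<sigma> \<subseteq> simplex_points \<tau> \<and> h\<^sub>1 ` simplex_points \<sigma> \<subseteq> simplex_points \<tau>"
  shows "homotopic_with (\<lambda>_. True) (realization K) (realization K') h\<^sub>0 h\<^sub>1"
  unfolding homotopic_with_def
proof (intro exI conjI)
  let ?H = "\<lambda>(s, x) b. (1 - s) * h\<^sub>0 x b + s * h\<^sub>1 x b"
  show "continuous_map (prod_topology (top_of_set {0..1}) (realization K)) (realization K') ?H"
  proof (rule continuous_map_from_prod_realization)
    show "locally compact {0..1::real}"
      by (simp add: closed_imp_locally_compact)
    fix \<sigma> assume \<sigma>: "\<sigma> \<in> K"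
    then obtain \<tau> where "\<tau> \<in> K'"
      and \<tau>: "h\<^sub>0 ` simplex_points \<sigma> \<subseteq> simplex_points \<tau>" "h\<^sub>1 ` simplex_points \<sigma> \<subseteq> simplex_points \<tau>"
      using carrier by blast
    moreover have "?H p \<in> simplex_points \<tau>" if p: "p \<in> {0..1} \<times> simplex_points \<sigma>" for p
    proof -
      obtain s x where "p = (s, x)" "s \<in> {0..1::real}" "x \<in> simplex_points \<sigma>"
        using p by blast
      then show ?thesis
        using simplex_points_convex[of "h\<^sub>0 x" \<tau> "h\<^sub>1 x" s] \<tau> by auto
    qed
    moreover have "continuous_on ({0..1} \<times> simplex_points \<sigma>) ?H"
      using cont[OF \<sigma>] continuous_on_straight_line_homotopy by blast
    ultimately show "continuous_map (top_of_set ({0..1} \<times> simplex_points \<sigma>)) (realization K') ?H"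
      by (intro continuous_map_into_realization image_subsetI)
  qed
qed simp_all

(* Summing over the support of x, rather than over a simplex containing it, makes the value
   independent of the simplex. *)
definition realize_map :: "('a \<Rightarrow> 'b) \<Rightarrow> ('a \<Rightarrow> real) \<Rightarrow> 'b \<Rightarrow> real" where
  "realize_map f x = (\<lambda>b. \<Sum>a\<in>{a. x a \<noteq> 0 \<and> f a = b}. x a)"

lemma realize_map_eq:
  assumes "finite \<sigma>" and "x \<in> simplex_points \<sigma>"
  shows "realize_map f x = (\<lambda>b. \<Sum>a\<in>{a\<in>\<sigma>. f a = b}. x a)"
proof
  fix b
  have "{a. x a \<noteq> 0 \<and> f a = b} \<subseteq> {a\<in>\<sigma>. f a = b}"
    using assms(2) unfolding simplex_points_def by auto
  then show "realize_map f x b = (\<Sum>a\<in>{a\<in>\<sigma>. f a = b}. x a)"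
    unfolding realize_map_def by (intro sum.mono_neutral_left) (use assms(1) in auto)
qed

lemma realize_map_simplex_points:
  assumes "finite \<sigma>" and "x \<in> simplex_points \<sigma>"
  shows "realize_map f x \<in> simplex_points (f ` \<sigma>)"
proof -
  have x: "\<forall>a. 0 \<le> x a" "\<forall>a. a \<notin> \<sigma> \<longrightarrow> x a = 0" "sum x \<sigma> = 1"
    using assms(2) unfolding simplex_points_def by auto
  have "(\<Sum>b\<in>f ` \<sigma>. \<Sum>a\<in>{a\<in>\<sigma>. f a = b}. x a) = sum x \<sigma>"
    using sum.image_gen[OF assms(1), of x f] by simp
  moreover have "(\<Sum>a\<in>{a\<in>\<sigma>. f a = b}. x a) = 0" if "b \<notin> f ` \<sigma>" for b
  proof -
    have "{a\<in>\<sigma>. f a = b} = {}"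
      using that by blast
    then show ?thesis
      by (simp only: sum.empty)
  qed
  ultimately show ?thesis
    unfolding realize_map_eq[OF assms] simplex_points_def using x by (auto intro: sum_nonneg)
qed

lemma continuous_on_realize_map:
  assumes "finite \<sigma>"
  shows "continuous_on (simplex_points \<sigma>) (realize_map f)"
proof -
  have c: "continuous_on (simplex_points \<sigma>) (\<lambda>x b. \<Sum>a\<in>{a\<in>\<sigma>. f a = b}. x a)"
    by (intro continuous_on_coordinatewise_then_product continuous_on_sum
        continuous_on_product_then_coordinatewise[OF continuous_on_id])
  show ?thesis
    by (rule continuous_on_cong[THEN iffD1, OF refl _ c]) (simp add: realize_map_eq[OF assms])
qed

lemma continuous_map_realize_map:
  assumes "\<And>\<sigma>. \<sigma> \<in> K \<Longrightarrow> finite \<sigma> \<and> f ` \<sigma> \<in> K'"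
  shows "continuous_map (realization K) (realization K') (realize_map f)"
proof (rule continuous_map_realizationI)
  fix \<sigma> assume "\<sigma> \<in> K"
  then have "finite \<sigma>" and "f ` \<sigma> \<in> K'"
    using assms by auto
  then show "continuous_on (simplex_points \<sigma>) (realize_map f)"
    and "\<exists>\<tau>\<in>K'. realize_map f ` simplex_points \<sigma> \<subseteq> simplex_points \<tau>"
    using continuous_on_realize_map realize_map_simplex_points by blast+
qed

lemma homotopic_realize_map_comp_id:
  assumes "\<And>\<sigma>. \<sigma> \<in> K \<Longrightarrow> finite \<sigma> \<and> \<sigma> \<union> g ` f ` \<sigma> \<in> K'"
  shows "homotopic_with (\<lambda>_. True) (realization K) (realization K') (realize_map g \<circ> realize_map f) id"
proof (rule homotopic_with_realization_if_carried)
  fix \<sigma> assume "\<sigma> \<in> K"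
  then have fin: "finite \<sigma>" and \<tau>: "\<sigma> \<union> g ` f ` \<sigma> \<in> K'"
    using assms by auto
  have fin': "finite (\<sigma> \<union> g ` f ` \<sigma>)"
    using fin by simp
  have image_f: "realize_map f ` simplex_points \<sigma> \<subseteq> simplex_points (f ` \<sigma>)"
    using realize_map_simplex_points[OF fin] by blast
  have "continuous_on (simplex_points \<sigma>) (realize_map g \<circ> realize_map f)"
    using continuous_on_realize_map[of "f ` \<sigma>" g] fin
    by (intro continuous_on_compose continuous_on_realize_map[OF fin] continuous_on_subset[OF _ image_f])
      simp
  then show "continuous_on (simplex_points \<sigma>) (realize_map g \<circ> realize_map f) \<and> continuous_on (simplex_points \<sigma>) id"
    by simp
  have "(realize_map g \<circ> realize_map f) ` simplex_points \<sigma> \<subseteq> simplex_points (g ` f ` \<sigma>)"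
    using image_f realize_map_simplex_points[of "f ` \<sigma>"] fin by fastforce
  moreover have "simplex_points (g ` f ` \<sigma>) \<subseteq> simplex_points (\<sigma> \<union> g ` f ` \<sigma>)"
    and "simplex_points \<sigma> \<subseteq> simplex_points (\<sigma> \<union> g ` f ` \<sigma>)"
    using simplex_points_mono[OF _ fin'] by auto
  ultimately show "\<exists>\<tau>\<in>K'. (realize_map g \<circ> realize_map f) ` simplex_points \<sigma> \<subseteq> simplex_points \<tau> \<and>
      id ` simplex_points \<sigma> \<subseteq> simplex_points \<tau>"
    using \<tau> by auto
qed

lemma continuous_map_realize_map_rips:
  assumes R: "carries_nerve \<Lambda> \<Lambda>' \<beta> R" and f: "\<And>a. (a, f a) \<in> R"
    and "mono \<beta>" and "s \<le> t"
  shows "continuous_map (realization (rips \<Lambda> s)) (realization (rips \<Lambda>' (\<beta> t))) (realize_map f)"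
proof (rule continuous_map_realize_map)
  fix \<sigma> assume \<sigma>: "\<sigma> \<in> rips \<Lambda> s"
  have "f ` \<sigma> \<subseteq> R `` \<sigma>"
    using f by blast
  then have "f ` \<sigma> \<in> rips \<Lambda>' (\<beta> s)"
    using rips_subset_Image[OF R \<sigma>] finite_rips[OF \<sigma>] by simp
  then show "finite \<sigma> \<and> f ` \<sigma> \<in> rips \<Lambda>' (\<beta> t)"
    using finite_rips[OF \<sigma>] rips_mono[OF monoD[OF \<open>mono \<beta>\<close> \<open>s \<le> t\<close>]] by blast
qed

lemma homotopic_realize_map_rips:
  assumes R: "carries_nerve \<Lambda> \<Lambda>' \<beta> R" and S: "carries_nerve \<Lambda>' \<Lambda> \<gamma> S" and "Id \<subseteq> R O S"
    and f: "\<And>a. (a, f a) \<in> R" and g: "\<And>b. (b, g b) \<in> S"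
  shows "homotopic_with (\<lambda>_. True) (realization (rips \<Lambda> t)) (realization (rips \<Lambda> (\<gamma> (\<beta> t))))
           (realize_map g \<circ> realize_map f) id"
proof (rule homotopic_realize_map_comp_id)
  fix \<sigma> assume \<sigma>: "\<sigma> \<in> rips \<Lambda> t"
  have "\<sigma> \<union> g ` f ` \<sigma> \<subseteq> (R O S) `` \<sigma>"
  proof (rule Un_least)
    show "\<sigma> \<subseteq> (R O S) `` \<sigma>"
      using \<open>Id \<subseteq> R O S\<close> by auto
    show "g ` f ` \<sigma> \<subseteq> (R O S) `` \<sigma>"
      using f g by blast
  qed
  then have "\<sigma> \<union> g ` f ` \<sigma> \<in> rips \<Lambda> ((\<gamma> \<circ> \<beta>) t)"
    using rips_subset_Image[OF carries_nerve_relcomp[OF R S] \<sigma>] finite_rips[OF \<sigma>] by simp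
  then show "finite \<sigma> \<and> \<sigma> \<union> g ` f ` \<sigma> \<in> rips \<Lambda> (\<gamma> (\<beta> t))"
    using finite_rips[OF \<sigma>] by simp
qed

theorem corollary7p15:
  fixes \<Lambda> :: "'l \<Rightarrow> 'w \<Rightarrow> ennreal" and \<Lambda>' :: "'l2 \<Rightarrow> 'w2 \<Rightarrow> ennreal"
    and \<alpha> \<alpha>' :: "ennreal \<Rightarrow> ennreal"
  assumes "mono \<alpha>" and "mono \<alpha>'" and "\<And>t. t \<le> \<alpha> t" and "\<And>t. t \<le> \<alpha>' t"
    and "dowker_interleaved \<Lambda> \<Lambda>' \<alpha> \<alpha>'"
  shows "filtered_interleaved (rips \<Lambda>) (rips \<Lambda>') \<alpha> \<alpha>'"
proof -
  obtain C C' where CC': "dowker_interleaving \<Lambda> \<Lambda>' \<alpha> \<alpha>' C C'"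
    using assms(5) unfolding dowker_interleaved_def by blast
  note C = dowker_interleaving_carries_nerve(1)[OF CC']
    and C' = dowker_interleaving_carries_nerve(2)[OF CC']
  have "Id \<subseteq> C O C'" and "Id \<subseteq> C' O C"
    using CC' unfolding dowker_interleaving_def by blast+
  obtain f where f: "\<And>a. (a, f a) \<in> C"
    using Id_subset_relcompE[OF \<open>Id \<subseteq> C O C'\<close>] by blast
  obtain g where g: "\<And>b. (b, g b) \<in> C'"
    using Id_subset_relcompE[OF \<open>Id \<subseteq> C' O C\<close>] by blast
  note F = continuous_map_realize_map_rips[OF C f \<open>mono \<alpha>\<close>]
    and G = continuous_map_realize_map_rips[OF C' g \<open>mono \<alpha>'\<close>]
  \<comment> \<open>The maps do not depend on t.\<close>
  show ?thesis
    unfolding filtered_interleaved_def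
    by (intro exI[of _ "\<lambda>_. realize_map f"] exI[of _ "\<lambda>_. realize_map g"] conjI allI impI)
      (simp_all add: F G homotopic_realize_map_rips[OF C C' \<open>Id \<subseteq> C O C'\<close> f g]
        homotopic_realize_map_rips[OF C' C \<open>Id \<subseteq> C' O C\<close> g f])
qed

end
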